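(* Assume Cramér's conjecture. Then for every positive integer $m$ there exists $n_0$ such that every integer $n\ge n_0$ having exactly $m$ distinct prime factors satisfies Condition 1.
   Context: Let $p_i$ denote the $i$-th prime. Cramér's conjecture: there exist constants $M$ and $N$ such that whenever $p_i\ge N$, $p_{i+1}-p_i\le M(\log p_i)^2$. A positive integer $n$ satisfies Condition 1 if there exist primes $p$ and $q$ such that for all integers $k$ with $1\le k\le n-1$, $\binom{n}{k}$ is divisible by $p$ or $q$. *)

theory Defs
  imports "HOL-Computational_Algebra.Primes" "HOL-Library.Infinite_Set" Complex_Main
begin

(* nth_prime i : the i-th prime, 0-indexed (nth_prime 0 = 2) *)
definition nth_prime :: "nat \<Rightarrow> nat" where
  "nth_prime i = enumerate {p::nat. prime p} i"

definition cramer_conjecture :: bool where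
  "cramer_conjecture \<longleftrightarrow>
     (\<exists>(M::real) (N::real). \<forall>i. real (nth_prime i) \<ge> N \<longrightarrow>
        real (nth_prime (Suc i)) - real (nth_prime i) \<le> M * (ln (real (nth_prime i)))^2)"

definition condition1 :: "nat \<Rightarrow> bool" where
  "condition1 n \<longleftrightarrow>
     (\<exists>p q::nat. prime p \<and> prime q \<and>
        (\<forall>k. 1 \<le> k \<and> k \<le> n - 1 \<longrightarrow> p dvd (n choose k) \<or> q dvd (n choose k)))"

end

theory Submission
  imports Defs "HOL-Real_Asymp.Real_Asymp"
begin

text \<open>
  If \<open>p \<le> n\<close> is prime and \<open>q\<^sup>e\<close> is a prime power dividing \<open>n\<close> with \<open>n - p < q\<^sup>e\<close>, then
  every \<open>n choose k\<close> with \<open>0 < k < n\<close> is divisible by \<open>p\<close> or \<open>q\<close>: by \<open>q\<close> when \<open>k\<close> or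
  \<open>n - k\<close> is below \<open>q\<^sup>e\<close>, and by \<open>p\<close> when both \<open>k\<close> and \<open>n - k\<close> are below \<open>p\<close>; the
  hypothesis \<open>n - p < q\<^sup>e\<close> makes these cases exhaustive.
  Cramer's conjecture puts a prime within \<open>c (log n)\<^sup>2\<close> below \<open>n\<close>, while \<open>n\<close> is the
  product of its \<open>m\<close> prime power factors, so one of them exceeds \<open>n\<^bsup>1/m\<^esup>\<close>, which for large
  \<open>n\<close> is bigger than \<open>c (log n)\<^sup>2\<close>.
\<close>

lemma prime_dvd_choose_if_prime_power_dvd:
  fixes n k q e :: nat
  assumes "prime q" "q ^ e dvd n" "0 < k" "k < q ^ e"
  shows "q dvd n choose k"
proof (rule ccontr)
  assume "\<not> q dvd n choose k"
  then have "coprime (q ^ e) (n choose k)"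
    using assms(1) by (simp add: prime_imp_coprime)
  moreover have "q ^ e dvd k * (n choose k)"
    using assms(2) times_binomial_minus1_eq[OF assms(3), of n] by (metis dvd_mult2)
  ultimately have "q ^ e dvd k"
    using coprime_dvd_mult_left_iff by blast
  then show False
    using assms(3,4) by (simp add: nat_dvd_not_less)
qed

lemma prime_dvd_choose_if_gt:
  fixes n k p :: nat
  assumes "prime p" "p \<le> n" "k \<le> n" "k < p" "n - k < p"
  shows "p dvd n choose k"
proof -
  have "fact n = fact k * fact (n - k) * (n choose k)"
    using binomial_fact_lemma[OF assms(3)] by simp
  moreover have "p dvd fact n"
    using assms by (simp add: prime_dvd_fact_iff)
  moreover have "\<not> p dvd fact k * fact (n - k)"
    using assms by (simp add: prime_dvd_mult_iff prime_dvd_fact_iff)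
  ultimately show ?thesis
    using assms(1) by (metis prime_dvd_mult_iff)
qed

lemma condition1_if_prime_near_and_prime_power_dvd:
  fixes n p q e :: nat
  assumes p: "prime p" "p \<le> n" and q: "prime q" "q ^ e dvd n" and near: "n - p < q ^ e"
  shows "condition1 n"
  unfolding condition1_def
proof (intro exI conjI allI impI)
  fix k assume "1 \<le> k \<and> k \<le> n - 1"
  then have k: "0 < k" "k < n"
    by auto
  consider "k \<le> n - p" | "n - p < k" "k < p" | "p \<le> k"
    by linarith
  then show "p dvd n choose k \<or> q dvd n choose k"
  proof cases
    case 1
    then show ?thesis
      using prime_dvd_choose_if_prime_power_dvd[OF q, of k] k near by simp
  next
    case 2
    then show ?thesis
      using prime_dvd_choose_if_gt[OF p, of k] k by simp
  next
    case 3
    then have "n - k < q ^ e"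
      using near by linarith
    then have "q dvd n choose (n - k)"
      using prime_dvd_choose_if_prime_power_dvd[OF q, of "n - k"] k by simp
    then show ?thesis
      using k binomial_symmetric[of k n] by simp
  qed
qed (use p q in auto)

lemma le_power_card_prime_factors:
  fixes n d :: nat
  assumes "0 < n" "\<And>q. q \<in> prime_factors n \<Longrightarrow> q ^ multiplicity q n \<le> d"
  shows "n \<le> d ^ card (prime_factors n)"
proof -
  have "n = (\<Prod>q \<in> prime_factors n. q ^ multiplicity q n)"
    using prod_prime_factors[of n] assms(1) by simp
  also have "\<dots> \<le> (\<Prod>q \<in> prime_factors n. d)"
    using assms(2) by (intro prod_mono) simp
  finally show ?thesis
    by simp
qed

lemma condition1_if_prime_near:
  fixes n p :: nat
  assumes "prime p" "p \<le> n" "(n - p) ^ card (prime_factors n) < n"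
  shows "condition1 n"
proof -
  obtain q where "q \<in> prime_factors n" "n - p < q ^ multiplicity q n"
    using le_power_card_prime_factors[of n "n - p"] assms(3) by force
  then show ?thesis
    using condition1_if_prime_near_and_prime_power_dvd[OF assms(1,2)] multiplicity_dvd
    by blast
qed

lemma prime_nth_prime: "prime (nth_prime i)"
  unfolding nth_prime_def using enumerate_in_set[OF primes_infinite] by simp

lemma le_nth_prime: "i \<le> nth_prime i"
  unfolding nth_prime_def using le_enumerate[OF primes_infinite] by simp

lemma nth_prime_bracket:
  assumes "nth_prime i0 \<le> n"
  obtains i where "i0 \<le> i" "nth_prime i \<le> n" "n < nth_prime (Suc i)"
proof -
  define I where "I = {i. nth_prime i \<le> n}"
  have "finite I"
    unfolding I_def by (rule finite_subset[of _ "{..n}"]) (auto intro: le_trans[OF le_nth_prime])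
  moreover have "i0 \<in> I"
    unfolding I_def using assms by simp
  ultimately have "i0 \<le> Max I" "nth_prime (Max I) \<le> n"
    using Max_in[of I] unfolding I_def by auto
  moreover have "n < nth_prime (Suc (Max I))"
    using Max_ge[OF \<open>finite I\<close>, of "Suc (Max I)"] unfolding I_def by fastforce
  ultimately show ?thesis
    using that by blast
qed

lemma cramer_conjecture_prime_near:
  assumes cramer_conjecture
  obtains c :: real where "c > 0"
    "eventually (\<lambda>n. \<exists>p. prime p \<and> p \<le> n \<and> real (n - p) < c * ln (real n) ^ 2) sequentially"
proof -
  from assms obtain M N :: real where gap: "\<And>i. real (nth_prime i) \<ge> N \<Longrightarrow>
        real (nth_prime (Suc i)) - real (nth_prime i) \<le> M * ln (real (nth_prime i)) ^ 2"
    unfolding cramer_conjecture_def by blast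
  define c where "c = max M 1"
  have "\<exists>p. prime p \<and> p \<le> n \<and> real (n - p) < c * ln (real n) ^ 2"
    if n: "nth_prime (nat \<lceil>N\<rceil>) \<le> n" for n
  proof -
    obtain i where i: "nat \<lceil>N\<rceil> \<le> i" "nth_prime i \<le> n" "n < nth_prime (Suc i)"
      using nth_prime_bracket[OF n] by blast
    define p where "p = nth_prime i"
    have "1 \<le> p"
      unfolding p_def using prime_ge_1_nat[OF prime_nth_prime] .
    have "nat \<lceil>N\<rceil> \<le> p"
      unfolding p_def using i(1) le_nth_prime[of i] by linarith
    then have "real (nth_prime (Suc i)) - real p \<le> M * ln (real p) ^ 2"
      using gap[of i] unfolding p_def by simp
    also have "\<dots> \<le> c * ln (real p) ^ 2"
      unfolding c_def by (intro mult_right_mono) auto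
    also have "\<dots> \<le> c * ln (real n) ^ 2"
      using \<open>1 \<le> p\<close> i(2) unfolding c_def p_def by (intro mult_left_mono power_mono) auto
    finally have "real (n - p) < c * ln (real n) ^ 2"
      using i(2,3) unfolding p_def by (simp add: of_nat_diff)
    then show ?thesis
      using i(2) prime_nth_prime unfolding p_def by blast
  qed
  then have "eventually (\<lambda>n. \<exists>p. prime p \<and> p \<le> n \<and> real (n - p) < c * ln (real n) ^ 2) sequentially"
    unfolding eventually_sequentially by blast
  moreover have "c > 0"
    unfolding c_def by simp
  ultimately show ?thesis
    using that by blast
qed

lemma power_ln_squared_eventually_less:
  fixes c :: real and m :: nat
  assumes "c > 0"
  shows "eventually (\<lambda>n. (c * ln (real n) ^ 2) ^ m < real n) sequentially"
proof -
  have "eventually (\<lambda>x. real m * ln (c * ln x ^ 2) < ln x) at_top"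
    using assms by real_asymp
  moreover have "eventually (\<lambda>x::real. 1 < x) at_top"
    by (rule eventually_gt_at_top)
  ultimately have "eventually (\<lambda>x. (c * ln x ^ 2) ^ m < x) at_top"
  proof eventually_elim
    case (elim x)
    then have pos: "0 < c * ln x ^ 2"
      using assms by simp
    then have "ln ((c * ln x ^ 2) ^ m) < ln x"
      using elim(1) by (simp add: ln_realpow)
    then show ?case
      using pos elim(2) by simp
  qed
  then show ?thesis
    by (rule eventually_compose_filterlim[OF _ filterlim_real_sequentially])
qed

theorem mainTheorem16:
  assumes "cramer_conjecture"
  shows "\<forall>m::nat. m > 0 \<longrightarrow> (\<exists>n0::nat. \<forall>n::nat. n \<ge> n0 \<and> card (prime_factors n) = m \<longrightarrow> condition1 n)"
proof (intro allI impI)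
  fix m :: nat
  obtain c :: real where "c > 0" and prime_near:
    "eventually (\<lambda>n. \<exists>p. prime p \<and> p \<le> n \<and> real (n - p) < c * ln (real n) ^ 2) sequentially"
    using cramer_conjecture_prime_near[OF assms] by blast
  have "eventually (\<lambda>n. card (prime_factors n) = m \<longrightarrow> condition1 n) sequentially"
    using prime_near power_ln_squared_eventually_less[OF \<open>c > 0\<close>, of m]
  proof eventually_elim
    case (elim n)
    show ?case
    proof
      assume m: "card (prime_factors n) = m"
      obtain p where p: "prime p" "p \<le> n" "real (n - p) < c * ln (real n) ^ 2"
        using elim(1) by blast
      have "real (n - p) ^ m \<le> (c * ln (real n) ^ 2) ^ m"
        using p(3) by (intro power_mono) auto
      then have "real ((n - p) ^ m) < real n"
        using elim(2) by (simp only: of_nat_power)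
      then have "(n - p) ^ card (prime_factors n) < n"
        unfolding m by (simp only: of_nat_less_iff)
      then show "condition1 n"
        using condition1_if_prime_near[OF p(1,2)] by blast
    qed
  qed
  then show "\<exists>n0. \<forall>n. n \<ge> n0 \<and> card (prime_factors n) = m \<longrightarrow> condition1 n"
    unfolding eventually_sequentially by blast
qed

end
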